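(* Let $1\le p_1,p_2,p_3\le\infty$ with $\frac1{p_1}+\frac1{p_2}+\frac1{p_3}\ge2$, and let $r=\left(\frac1{p_1}+\frac1{p_2}+\frac1{p_3}\right)^{-1}\le\tfrac12$. Then there is no constant $C<\infty$ such that $\|C^{1,1,-2}(f_1,f_2,f_3)\|_{L^r(\mathbb{R})}\le C\prod_{j=1}^3\|f_j\|_{L^{p_j}(\mathbb{R})}$ for all Schwartz $f_1,f_2,f_3$. In particular $C^{1,1,-2}$ does not map into $L^r(\mathbb{R})$ for any $r\le 1/2$.
   Context: Fourier transform: $\hat f(\xi)=\int f(x)e^{-2\pi i x\xi}dx$. $C^{1,1,-2}(f_1,f_2,f_3)(x)=\int_{\xi_1<\xi_2<-\xi_3/2}\prod_{j=1}^3\hat f_j(\xi_j)e^{2\pi i x\xi_j}\,d\vec\xi$ for Schwartz $f_j$. *)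

theory Defs
  imports "HOL-Analysis.Analysis" "HOL-Probability.Essential_Supremum"
begin

definition schwartz :: "(real \<Rightarrow> complex) \<Rightarrow> bool" where
  "schwartz f \<longleftrightarrow>
     (\<exists>D :: nat \<Rightarrow> real \<Rightarrow> complex.
        D 0 = f \<and>
        (\<forall>k x. (D k has_vector_derivative D (Suc k) x) (at x)) \<and>
        (\<forall>a k. \<exists>M. \<forall>x. \<bar>x\<bar> ^ a * norm (D k x) \<le> M))"

definition fourier :: "(real \<Rightarrow> complex) \<Rightarrow> real \<Rightarrow> complex" where
  "fourier f \<xi> = (LINT x|lborel. f x * cis (- 2 * pi * x * \<xi>))"

definition C112 :: "(real \<Rightarrow> complex) \<Rightarrow> (real \<Rightarrow> complex) \<Rightarrow> (real \<Rightarrow> complex) \<Rightarrow> real \<Rightarrow> complex" where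
  "C112 f1 f2 f3 x =
     (LINT \<xi>:{\<xi> :: real \<times> real \<times> real. fst \<xi> < fst (snd \<xi>) \<and> fst (snd \<xi>) < - snd (snd \<xi>) / 2}|lborel.
        (case \<xi> of (\<xi>1, \<xi>2, \<xi>3) \<Rightarrow>
          fourier f1 \<xi>1 * cis (2 * pi * x * \<xi>1) *
          fourier f2 \<xi>2 * cis (2 * pi * x * \<xi>2) *
          fourier f3 \<xi>3 * cis (2 * pi * x * \<xi>3)))"

definition Lp_norm :: "ennreal \<Rightarrow> (real \<Rightarrow> complex) \<Rightarrow> ennreal" where
  "Lp_norm p f =
     (if p = \<infinity> then esssup lborel (\<lambda>x. ennreal (norm (f x)))
      else (let I = (\<integral>\<^sup>+ x. ennreal (norm (f x) powr enn2real p) \<partial>lborel)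
            in if I = \<infinity> then \<infinity> else ennreal (enn2real I powr (1 / enn2real p))))"

end

theory Submission
  imports Defs "HOL-Probability.Probability" "HOL-Computational_Algebra.Polynomial"
    "HOL-Real_Asymp.Real_Asymp"
begin

text \<open>
  Test the estimate on \<open>f\<^sub>1 = f\<^sub>2 = f\<^sub>3 = g\<close> with \<open>g(x) = exp(-\<pi> x\<^sup>2)\<close>: it is a
  Schwartz function, its own Fourier transform, and lies in every \<open>L\<^sup>p\<close>.  The shear
  \<open>\<xi> = (a, a + t, -s - 2a - t)\<close> maps the cone \<open>\<xi>\<^sub>1 < \<xi>\<^sub>2 < -\<xi>\<^sub>3/2\<close> onto \<open>0 < t < s\<close> and
  turns the phase \<open>\<xi>\<^sub>1 + \<xi>\<^sub>2 + \<xi>\<^sub>3\<close> into \<open>-s\<close>; integrating out \<open>a\<close> and \<open>t\<close> gives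
  \<open>C(g,g,g)(x) = \<integral>\<^sub>0\<^sup>\<infinity> \<phi>(s) exp(-2\<pi>ixs) ds\<close> with
  \<open>\<phi>(s) = exp(-\<pi>s\<^sup>2/3) \<integral>\<^sub>0\<^sup>s exp(-\<pi>t\<^sup>2/2) dt / \<surd>6\<close>.  Since \<open>\<phi>(0) = 0\<close> and
  \<open>\<phi>'(0) = 1/\<surd>6\<close>, three integrations by parts give \<open>|C(g,g,g)(x)| \<ge> c/x\<^sup>2\<close> for large \<open>x\<close>,
  so \<open>|C(g,g,g)|\<^sup>r\<close> is not integrable at infinity when \<open>r \<le> 1/2\<close>.
\<close>

lemma borel_measurable_cis [measurable]: "cis \<in> borel_measurable borel"
  by (intro borel_measurable_continuous_onI continuous_intros continuous_on_id)

lemma continuous_imp_measurable_lborel: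
  "continuous_on UNIV f \<Longrightarrow> f \<in> measurable lborel lborel"
  by (simp add: borel_measurable_continuous_onI)

section \<open>Gaussians\<close>

definition gauss :: "real \<Rightarrow> real \<Rightarrow> real" where
  "gauss c x = exp (- c * x\<^sup>2)"

definition gaussian :: "real \<Rightarrow> complex" where
  "gaussian x = complex_of_real (gauss pi x)"

lemma gauss_pos: "0 < gauss c x"
  by (simp add: gauss_def)

lemma gauss_le_1: "0 \<le> c \<Longrightarrow> gauss c x \<le> 1"
  by (simp add: gauss_def)

lemma gauss_0 [simp]: "gauss c 0 = 1"
  by (simp add: gauss_def)

lemma continuous_on_gauss [continuous_intros]: "continuous_on A (gauss c)"
  unfolding gauss_def by (intro continuous_intros)

lemma borel_measurable_gauss [measurable]: "gauss c \<in> borel_measurable borel"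
  by (intro borel_measurable_continuous_onI continuous_on_gauss)

lemma has_real_derivative_gauss: "(gauss c has_real_derivative (- 2 * c * x * gauss c x)) (at x)"
  unfolding gauss_def by (auto intro!: derivative_eq_intros)

lemma fourier_gaussian: "fourier gaussian \<xi> = gaussian \<xi>"
proof -
  have c: "sqrt (2*pi) \<noteq> 0" by simp
  have "fourier gaussian \<xi> = (\<integral>x. gaussian x * cis (- 2 * pi * x * \<xi>) \<partial>lborel)"
    by (simp add: fourier_def)
  also have "\<dots> = \<bar>1/sqrt (2*pi)\<bar> *\<^sub>R (\<integral>x. gaussian (0 + (1/sqrt (2*pi)) * x) *
      cis (- 2 * pi * (0 + (1/sqrt (2*pi)) * x) * \<xi>) \<partial>lborel)"
    by (rule lborel_integral_real_affine) simp
  also have "\<dots> = (\<integral>x. std_normal_density x *\<^sub>R iexp ((- sqrt (2*pi) * \<xi>) * x) \<partial>lborel)"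
  proof (subst integral_scaleR_right[symmetric], rule Bochner_Integration.integral_cong[OF refl])
    fix x
    have s2: "sqrt (2*pi) ^ 2 = 2 * pi" by simp
    have e1: "- 2 * pi * (0 + 1 / sqrt (2 * pi) * x) * \<xi> = (- sqrt (2*pi) * \<xi>) * x"
      using s2 c by (simp add: field_simps power2_eq_square)
    have e2: "- pi * (0 + 1 / sqrt (2 * pi) * x)^2 = - x\<^sup>2 / 2"
      using s2 c by (simp add: field_simps power2_eq_square)
    show "\<bar>1 / sqrt (2 * pi)\<bar> *\<^sub>R (gaussian (0 + 1 / sqrt (2 * pi) * x) *
        cis (- 2 * pi * (0 + 1 / sqrt (2 * pi) * x) * \<xi>))
       = std_normal_density x *\<^sub>R iexp (- sqrt (2 * pi) * \<xi> * x)"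
      unfolding e1 gaussian_def gauss_def e2 std_normal_density_def
      by (simp add: cis_conv_exp scaleR_conv_of_real mult_ac)
  qed
  also have "\<dots> = char std_normal_distribution (- sqrt (2*pi) * \<xi>)"
    unfolding char_def by (subst integral_density) auto
  also have "\<dots> = gaussian \<xi>"
    by (simp add: char_std_normal_distribution gaussian_def gauss_def power_mult_distrib)
  finally show ?thesis .
qed

lemma power_divide_fact_le_exp: "0 \<le> (t::real) \<Longrightarrow> t ^ n / fact n \<le> exp t"
proof -
  assume t: "0 \<le> t"
  have "t ^ n / fact n \<le> (\<Sum>k<Suc n. t ^ k /\<^sub>R fact k)"
    using t by (simp add: divide_inverse_commute sum_nonneg)
  also have "\<dots> \<le> (\<Sum>k. t ^ k /\<^sub>R fact k)"
    using t by (intro sum_le_suminf summable_exp_generic) auto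
  also have "\<dots> = exp t" by (simp add: exp_def)
  finally show ?thesis .
qed

lemma abs_power_mult_gauss_le:
  assumes "0 < c"
  shows "\<bar>x\<bar> ^ n * gauss c x \<le> fact n * exp (1 / (4*c))"
proof -
  have "\<bar>x\<bar> ^ n \<le> fact n * exp \<bar>x\<bar>"
    using power_divide_fact_le_exp[of "\<bar>x\<bar>" n] by (simp add: divide_le_eq mult.commute)
  moreover have "\<bar>x\<bar> - c * x^2 \<le> 1 / (4*c)"
  proof -
    have "0 \<le> (c*\<bar>x\<bar> - 1/2)^2" by simp
    then have "0 \<le> c^2*x^2 - c*\<bar>x\<bar> + 1/4" by (simp add: power2_eq_square algebra_simps)
    then show ?thesis using assms by (simp add: field_simps power2_eq_square)
  qed
  ultimately have "\<bar>x\<bar> ^ n * gauss c x \<le> fact n * exp \<bar>x\<bar> * exp (- c * x^2)"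
    by (auto simp: gauss_def intro!: mult_right_mono)
  also have "\<dots> = fact n * exp (\<bar>x\<bar> - c * x^2)"
    by (simp add: exp_diff exp_minus field_simps)
  also have "\<dots> \<le> fact n * exp (1 / (4*c))"
    using \<open>\<bar>x\<bar> - c * x^2 \<le> 1 / (4*c)\<close> by simp
  finally show ?thesis .
qed

lemma poly_mult_gauss_bounded:
  fixes p :: "real poly"
  assumes "0 < c"
  shows "\<exists>M. \<forall>x. \<bar>poly p x\<bar> * gauss c x \<le> M"
proof -
  define M where "M = (\<Sum>i\<le>degree p. \<bar>coeff p i\<bar> * (fact i * exp (1/(4*c))))"
  have "\<bar>poly p x\<bar> * gauss c x \<le> M" for x
  proof -
    have "\<bar>poly p x\<bar> \<le> (\<Sum>i\<le>degree p. \<bar>coeff p i\<bar> * \<bar>x\<bar>^i)"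
      unfolding poly_altdef by (rule order_trans[OF sum_abs]) (simp add: abs_mult power_abs)
    then have "\<bar>poly p x\<bar> * gauss c x \<le> (\<Sum>i\<le>degree p. \<bar>coeff p i\<bar> * \<bar>x\<bar>^i) * gauss c x"
      using gauss_pos[of c x] by (intro mult_right_mono) auto
    also have "\<dots> = (\<Sum>i\<le>degree p. \<bar>coeff p i\<bar> * (\<bar>x\<bar>^i * gauss c x))"
      by (simp add: sum_distrib_right mult.assoc)
    also have "\<dots> \<le> M" unfolding M_def
      by (intro sum_mono mult_left_mono abs_power_mult_gauss_le assms) auto
    finally show ?thesis .
  qed
  then show ?thesis by blast
qed

fun gauss_deriv_poly :: "nat \<Rightarrow> real poly" where
  "gauss_deriv_poly 0 = 1"
| "gauss_deriv_poly (Suc k) = pderiv (gauss_deriv_poly k) + [:0, - 2 * pi:] * gauss_deriv_poly k"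

lemma schwartz_gaussian: "schwartz gaussian"
  unfolding schwartz_def
proof (intro exI[of _ "\<lambda>k x. complex_of_real (poly (gauss_deriv_poly k) x * gauss pi x)"] conjI allI)
  show "(\<lambda>x. complex_of_real (poly (gauss_deriv_poly 0) x * gauss pi x)) = gaussian"
    by (simp add: gaussian_def[abs_def])
next
  fix k x
  have "((\<lambda>x. poly (gauss_deriv_poly k) x * gauss pi x) has_real_derivative
        (poly (gauss_deriv_poly (Suc k)) x * gauss pi x)) (at x)"
    by (rule DERIV_cong[OF DERIV_mult[OF poly_DERIV has_real_derivative_gauss]])
      (simp add: algebra_simps)
  then show "((\<lambda>x. complex_of_real (poly (gauss_deriv_poly k) x * gauss pi x)) has_vector_derivative
          complex_of_real (poly (gauss_deriv_poly (Suc k)) x * gauss pi x)) (at x)"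
    by (rule has_vector_derivative_of_real)
next
  fix a k
  obtain M where M: "\<And>x. \<bar>poly (monom 1 a * gauss_deriv_poly k) x\<bar> * gauss pi x \<le> M"
    using poly_mult_gauss_bounded[of pi "monom 1 a * gauss_deriv_poly k"] by auto
  show "\<exists>M. \<forall>x. \<bar>x\<bar> ^ a * cmod (complex_of_real (poly (gauss_deriv_poly k) x * gauss pi x)) \<le> M"
    using M gauss_pos[of pi]
    by (intro exI[of _ M] allI)
      (simp add: poly_monom abs_mult power_abs norm_mult mult.assoc less_imp_le del: of_real_mult)
qed

lemma integrable_abs_power_mult_gauss:
  assumes "0 < c"
  shows "integrable lborel (\<lambda>x. \<bar>x\<bar> ^ k * gauss c x)"
proof -
  define \<sigma> where "\<sigma> = sqrt (1 / (2*c))"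
  have s2: "\<sigma>^2 = 1/(2*c)" and sp: "\<sigma> > 0"
    using assms by (simp_all add: \<sigma>_def)
  have "sqrt (2 * pi * \<sigma>\<^sup>2) * (normal_density 0 \<sigma> x * \<bar>x - 0\<bar>^k) = \<bar>x\<bar> ^ k * gauss c x" for x
    using assms sp unfolding normal_density_def gauss_def s2 by (simp add: field_simps)
  then have "(\<lambda>x. sqrt (2 * pi * \<sigma>\<^sup>2) * (normal_density 0 \<sigma> x * \<bar>x - 0\<bar>^k)) = (\<lambda>x. \<bar>x\<bar> ^ k * gauss c x)"
    by auto
  moreover have "integrable lborel (\<lambda>x. sqrt (2 * pi * \<sigma>\<^sup>2) * (normal_density 0 \<sigma> x * \<bar>x - 0\<bar>^k))"
    using sp by (intro integrable_mult_right integrable_normal_moment_abs) auto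
  ultimately show ?thesis by simp
qed

lemma integrable_gauss: "0 < c \<Longrightarrow> integrable lborel (gauss c)"
  using integrable_abs_power_mult_gauss[of c 0] by simp

lemma Lp_norm_gaussian_finite:
  assumes "1 \<le> p"
  shows "Lp_norm p gaussian < \<infinity>"
proof (cases "p = \<infinity>")
  case True
  have "esssup lborel (\<lambda>x. ennreal (norm (gaussian x))) \<le> 1"
    by (rule esssup_I) (auto simp: gaussian_def abs_of_pos gauss_pos gauss_le_1)
  then show ?thesis using True by (simp add: Lp_norm_def order_le_less_trans)
next
  case False
  define q where "q = enn2real p"
  have q: "q \<ge> 1" using enn2real_mono[OF assms] False by (simp add: q_def top.not_eq_extremum)
  have "norm (gaussian x) powr q = gauss (q * pi) x" for x
    by (simp add: gaussian_def gauss_def powr_def)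
  moreover have "integrable lborel (gauss (q * pi))"
    using q by (intro integrable_gauss) simp
  then have "(\<integral>\<^sup>+ x. ennreal (gauss (q * pi) x) \<partial>lborel) < \<infinity>"
    by (simp add: integrable_iff_bounded gauss_pos less_imp_le)
  ultimately show ?thesis using False by (simp add: Lp_norm_def Let_def q_def[symmetric])
qed

section \<open>A measure-preserving shear of frequency space\<close>

lemma distr_fiberwise_lborel_pair:
  fixes g :: "'a::euclidean_space \<Rightarrow> 'b::euclidean_space \<Rightarrow> 'b"
  assumes T: "(\<lambda>z. (fst z, g (fst z) (snd z))) \<in> measurable (lborel \<Otimes>\<^sub>M lborel) (lborel \<Otimes>\<^sub>M lborel)"
    and gm: "\<And>x. g x \<in> measurable lborel lborel"
    and pres: "\<And>x. distr lborel lborel (g x) = lborel"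
  shows "distr (lborel \<Otimes>\<^sub>M lborel) (lborel \<Otimes>\<^sub>M lborel) (\<lambda>z. (fst z, g (fst z) (snd z))) = (lborel \<Otimes>\<^sub>M lborel)"
proof (rule measure_eqI)
  show "sets (distr (lborel \<Otimes>\<^sub>M lborel) (lborel \<Otimes>\<^sub>M lborel) (\<lambda>z. (fst z, g (fst z) (snd z)))) = sets (lborel \<Otimes>\<^sub>M lborel)"
    by simp
next
  fix A assume "A \<in> sets (distr (lborel \<Otimes>\<^sub>M lborel) (lborel \<Otimes>\<^sub>M lborel) (\<lambda>z. (fst z, g (fst z) (snd z))))"
  then have A: "A \<in> sets (lborel \<Otimes>\<^sub>M (lborel :: 'b measure))" by simp
  let ?T = "\<lambda>z::'a\<times>'b. (fst z, g (fst z) (snd z))"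
  have pre: "?T -` A \<inter> space (lborel \<Otimes>\<^sub>M lborel) \<in> sets (lborel \<Otimes>\<^sub>M lborel)"
    using measurable_sets[OF T A] .
  have "emeasure (distr (lborel \<Otimes>\<^sub>M lborel) (lborel \<Otimes>\<^sub>M lborel) ?T) A
      = emeasure (lborel \<Otimes>\<^sub>M lborel) (?T -` A \<inter> space (lborel \<Otimes>\<^sub>M lborel))"
    by (rule emeasure_distr[OF T A])
  also have "\<dots> = (\<integral>\<^sup>+x. emeasure lborel (Pair x -` (?T -` A \<inter> space (lborel \<Otimes>\<^sub>M lborel))) \<partial>lborel)"
    by (rule lborel.emeasure_pair_measure_alt[OF pre])
  also have "\<dots> = (\<integral>\<^sup>+x. emeasure lborel (Pair x -` A) \<partial>lborel)"
  proof (rule nn_integral_cong)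
    fix x :: 'a
    have B: "Pair x -` A \<in> sets (lborel :: 'b measure)"
      using A by (rule sets_Pair1)
    have "Pair x -` (?T -` A \<inter> space (lborel \<Otimes>\<^sub>M lborel)) = g x -` (Pair x -` A) \<inter> space lborel"
      by (auto simp: space_pair_measure)
    also have "emeasure lborel \<dots> = emeasure (distr lborel lborel (g x)) (Pair x -` A)"
      by (rule emeasure_distr[OF gm B, symmetric])
    also have "\<dots> = emeasure lborel (Pair x -` A)" by (simp add: pres)
    finally show "emeasure lborel (Pair x -` (?T -` A \<inter> space (lborel \<Otimes>\<^sub>M lborel))) = emeasure lborel (Pair x -` A)" .
  qed
  also have "\<dots> = emeasure (lborel \<Otimes>\<^sub>M lborel) A"
    by (rule lborel.emeasure_pair_measure_alt[OF A, symmetric])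
  finally show "emeasure (distr (lborel \<Otimes>\<^sub>M lborel) (lborel \<Otimes>\<^sub>M lborel) ?T) A = emeasure (lborel \<Otimes>\<^sub>M lborel) A" .
qed

lemma lborel_distr_reflect: "distr lborel lborel (\<lambda>s::real. k - s) = lborel"
proof -
  have "lborel = density (distr lborel borel (\<lambda>x::real. k + (-1) * x)) (\<lambda>_. ennreal \<bar>-1\<bar>)"
    by (rule lborel_real_affine) simp
  then have "distr lborel borel (\<lambda>x::real. k + (-1) * x) = lborel" by (simp add: density_1)
  moreover have "distr lborel lborel (\<lambda>s::real. k - s) = distr lborel borel (\<lambda>x::real. k + (-1) * x)"
    by (rule distr_cong) auto
  ultimately show ?thesis by simp
qed

definition freq_shear :: "real \<times> real \<times> real \<Rightarrow> real \<times> real \<times> real" where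
  "freq_shear z = (fst z, (fst z + fst (snd z), - snd (snd z) - 2 * fst z - fst (snd z)))"

lemma measurable_freq_shear[measurable]: "freq_shear \<in> measurable lborel lborel"
  unfolding freq_shear_def by (intro continuous_imp_measurable_lborel continuous_intros)

text \<open>For fixed \<open>a\<close>, the shear acts on \<open>(t, s)\<close> by the reflection \<open>g1 a\<close> followed by
  a translation.\<close>

lemma distr_freq_shear: "distr lborel lborel freq_shear = lborel"
proof -
  define g1 where "g1 a = (\<lambda>z::real\<times>real. (fst z, (- 2 * a - fst z) - snd z))" for a :: real
  define g where "g a = (\<lambda>z::real\<times>real. (a, 0) + g1 a z)" for a :: real
  have g1m: "g1 a \<in> measurable lborel lborel" for a unfolding g1_def by (intro continuous_imp_measurable_lborel continuous_intros)
  have g1p: "distr lborel lborel (g1 a) = lborel" for a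
  proof -
    have "distr (lborel \<Otimes>\<^sub>M lborel) (lborel \<Otimes>\<^sub>M lborel) (\<lambda>z::real\<times>real. (fst z, (\<lambda>t s. (- 2 * a - t) - s) (fst z) (snd z))) = (lborel \<Otimes>\<^sub>M lborel)"
      by (rule distr_fiberwise_lborel_pair) (auto simp: lborel_distr_reflect)
    then show ?thesis by (simp add: lborel_prod g1_def)
  qed
  have gm: "g a \<in> measurable lborel lborel" for a unfolding g_def g1_def by (intro continuous_imp_measurable_lborel continuous_intros)
  have gp: "distr lborel lborel (g a) = lborel" for a
  proof -
    have "distr lborel lborel (g a) = distr (distr lborel lborel (g1 a)) lborel ((+) (a, 0))"
      by (subst distr_distr) (auto simp: g_def comp_def g1m[simplified])
    also have "\<dots> = distr lborel lborel ((+) (a, 0))" by (simp add: g1p)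
    also have "\<dots> = distr lborel borel ((+) (a, 0))" by (rule distr_cong) auto
    also have "\<dots> = lborel" by (rule lborel_distr_plus)
    finally show ?thesis .
  qed
  have "distr (lborel \<Otimes>\<^sub>M lborel) (lborel \<Otimes>\<^sub>M lborel) (\<lambda>z::real\<times>(real\<times>real). (fst z, g (fst z) (snd z))) = (lborel \<Otimes>\<^sub>M lborel)"
    by (rule distr_fiberwise_lborel_pair[OF _ gm gp]) (unfold lborel_prod g_def g1_def, intro continuous_imp_measurable_lborel continuous_intros)
  moreover have "(\<lambda>z::real\<times>(real\<times>real). (fst z, g (fst z) (snd z))) = freq_shear"
    by (auto simp: g_def g1_def freq_shear_def fun_eq_iff algebra_simps)
  ultimately show ?thesis by (simp add: lborel_prod)
qed

section \<open>Fourier integrals over a half line\<close>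

definition half_line_fourier :: "(real \<Rightarrow> real) \<Rightarrow> real \<Rightarrow> complex" where
  "half_line_fourier \<phi> \<omega> = (LBINT s=0..\<infinity>. complex_of_real (\<phi> s) * cis (- \<omega> * s))"

lemma integrable_of_real_mult_cis:
  fixes \<phi> :: "real \<Rightarrow> real"
  assumes "integrable lborel \<phi>"
  shows "integrable lborel (\<lambda>s. complex_of_real (\<phi> s) * cis (- \<omega> * s))"
proof (rule Bochner_Integration.integrable_bound[OF assms])
  have [measurable]: "\<phi> \<in> borel_measurable borel"
    using borel_measurable_integrable[OF assms] by simp
  show "(\<lambda>s. complex_of_real (\<phi> s) * cis (- \<omega> * s)) \<in> borel_measurable lborel"
    by measurable
qed (auto simp: norm_mult)

lemma interval_lebesgue_integrable_half_line:
  "integrable lborel f \<Longrightarrow> interval_lebesgue_integrable lborel 0 \<infinity> f"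
  unfolding interval_lebesgue_integrable_def set_integrable_def
  by (simp add: integrable_mult_indicator)

lemma norm_half_line_fourier_le:
  assumes "integrable lborel \<phi>"
  shows "norm (half_line_fourier \<phi> \<omega>) \<le> (LBINT s. \<bar>\<phi> s\<bar>)"
proof -
  let ?f = "\<lambda>s. indicator (einterval 0 \<infinity>) s *\<^sub>R (complex_of_real (\<phi> s) * cis (- \<omega> * s))"
  have "norm (half_line_fourier \<phi> \<omega>) = norm (LBINT s. ?f s)"
    by (simp add: half_line_fourier_def interval_lebesgue_integral_def set_lebesgue_integral_def)
  also have "\<dots> \<le> (LBINT s. norm (?f s))"
    by (rule integral_norm_bound)
  also have "\<dots> \<le> (LBINT s. \<bar>\<phi> s\<bar>)"
  proof (rule integral_mono)
    show "integrable lborel (\<lambda>s. norm (?f s))"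
      using integrable_of_real_mult_cis[OF assms]
      by (intro integrable_norm integrable_mult_indicator) auto
    show "integrable lborel (\<lambda>s. \<bar>\<phi> s\<bar>)"
      using assms by (rule integrable_abs)
  qed (auto simp: norm_mult split: split_indicator)
  finally show ?thesis .
qed

lemma has_vector_derivative_cis_linear:
  "((\<lambda>s. cis (- \<omega> * s)) has_vector_derivative (- \<i> * \<omega>) * cis (- \<omega> * s)) (at s)"
proof -
  have "((\<lambda>s. - \<omega> * s) has_derivative (\<lambda>t. - \<omega> * t)) (at s)"
    by (auto intro!: derivative_eq_intros)
  then have "((\<lambda>s. cis (- \<omega> * s)) has_derivative (\<lambda>t. (- \<omega> * t) *\<^sub>R (\<i> * cis (- \<omega> * s)))) (at s)"
    by (rule has_derivative_cis)
  then show ?thesis unfolding has_vector_derivative_def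
    by (rule has_derivative_eq_rhs) (auto simp: fun_eq_iff scaleR_conv_of_real algebra_simps)
qed

lemma has_vector_derivative_of_real_mult_cis:
  fixes \<phi> :: "real \<Rightarrow> real"
  assumes "\<omega> \<noteq> 0" and deriv: "(\<phi> has_real_derivative \<phi>' s) (at s)"
  shows "((\<lambda>s. complex_of_real (\<phi> s) * cis (- \<omega> * s) / (- \<i> * \<omega>)) has_vector_derivative
    complex_of_real (\<phi> s) * cis (- \<omega> * s) + complex_of_real (\<phi>' s) * cis (- \<omega> * s) / (- \<i> * \<omega>)) (at s)"
proof -
  have "((\<lambda>s. complex_of_real (\<phi> s) * cis (- \<omega> * s)) has_vector_derivative
      complex_of_real (\<phi> s) * ((- \<i> * \<omega>) * cis (- \<omega> * s)) +
      complex_of_real (\<phi>' s) * cis (- \<omega> * s)) (at s)"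
    by (intro has_vector_derivative_mult has_vector_derivative_of_real deriv
        has_vector_derivative_cis_linear)
  from has_vector_derivative_mult_left[OF this, of "1 / (- \<i> * \<omega>)"]
  have "((\<lambda>s. complex_of_real (\<phi> s) * cis (- \<omega> * s) * (1 / (- \<i> * \<omega>))) has_vector_derivative
      (complex_of_real (\<phi> s) * ((- \<i> * \<omega>) * cis (- \<omega> * s)) +
       complex_of_real (\<phi>' s) * cis (- \<omega> * s)) * (1 / (- \<i> * \<omega>))) (at s)" .
  moreover have "(complex_of_real (\<phi> s) * ((- \<i> * \<omega>) * cis (- \<omega> * s)) +
      complex_of_real (\<phi>' s) * cis (- \<omega> * s)) * (1 / (- \<i> * \<omega>)) =
      complex_of_real (\<phi> s) * cis (- \<omega> * s) + complex_of_real (\<phi>' s) * cis (- \<omega> * s) / (- \<i> * \<omega>)"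
    using \<open>\<omega> \<noteq> 0\<close> by (simp add: field_simps)
  ultimately show ?thesis by (simp add: field_simps)
qed

lemma half_line_integral_FTC:
  fixes F f :: "real \<Rightarrow> 'a::euclidean_space"
  assumes deriv: "\<And>s. (F has_vector_derivative f s) (at s)" and cont: "\<And>s. isCont f s"
    and integrable: "integrable lborel f" and lim: "(F \<longlongrightarrow> 0) at_top"
  shows "(LBINT s=0..\<infinity>. f s) = - F 0"
proof -
  have "(LBINT s=0..\<infinity>. f s) = 0 - F 0"
  proof (rule interval_integral_FTC_integrable)
    show "set_integrable lborel (einterval 0 \<infinity>) f"
      using integrable unfolding set_integrable_def by (intro integrable_mult_indicator) auto
    have "isCont F 0"
      using deriv[of 0] by (rule has_vector_derivative_continuous)
    then have "(F \<longlongrightarrow> F 0) (at_right 0)"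
      by (simp add: isCont_def filterlim_at_split)
    then show "((F \<circ> real_of_ereal) \<longlongrightarrow> F 0) (at_right 0)"
      unfolding zero_ereal_def ereal_tendsto_simps1 .
    show "((F \<circ> real_of_ereal) \<longlongrightarrow> 0) (at_left \<infinity>)"
      using lim unfolding ereal_tendsto_simps1 .
  qed (use deriv cont in auto)
  then show ?thesis by simp
qed

lemma half_line_fourier_by_parts:
  fixes \<phi> \<phi>' :: "real \<Rightarrow> real"
  assumes "\<omega> \<noteq> 0"
    and deriv: "\<And>s. (\<phi> has_real_derivative \<phi>' s) (at s)" and cont: "continuous_on UNIV \<phi>'"
    and integrable: "integrable lborel \<phi>" "integrable lborel \<phi>'"
    and lim: "(\<phi> \<longlongrightarrow> 0) at_top"
  shows "half_line_fourier \<phi> \<omega> =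
    (complex_of_real (\<phi> 0) + half_line_fourier \<phi>' \<omega>) / (\<i> * \<omega>)"
proof -
  define F where "F s = complex_of_real (\<phi> s) * cis (- \<omega> * s) / (- \<i> * \<omega>)" for s
  define f where "f s = complex_of_real (\<phi> s) * cis (- \<omega> * s) +
    complex_of_real (\<phi>' s) * cis (- \<omega> * s) / (- \<i> * \<omega>)" for s
  have F_deriv: "(F has_vector_derivative f s) (at s)" for s
    unfolding F_def f_def using \<open>\<omega> \<noteq> 0\<close> deriv by (rule has_vector_derivative_of_real_mult_cis)
  have "continuous_on UNIV \<phi>"
    using deriv by (intro continuous_at_imp_continuous_on ballI DERIV_isCont) auto
  note integrable_cis = integrable_of_real_mult_cis[OF integrable(1)] integrable_of_real_mult_cis[OF integrable(2)]
  have "(LBINT s=0..\<infinity>. f s) = - F 0"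
  proof (rule half_line_integral_FTC[OF F_deriv])
    show "isCont f s" for s unfolding f_def
      using \<open>continuous_on UNIV \<phi>\<close> cont \<open>\<omega> \<noteq> 0\<close>
      by (auto simp: continuous_on_eq_continuous_at cis_conv_exp intro!: continuous_intros)
    show "integrable lborel f"
      unfolding f_def using integrable_cis by (intro Bochner_Integration.integrable_add integrable_divide)
    show "(F \<longlongrightarrow> 0) at_top"
    proof (rule Lim_null_comparison)
      show "\<forall>\<^sub>F s in at_top. norm (F s) \<le> \<bar>\<phi> s\<bar> / \<bar>\<omega>\<bar>"
        by (simp add: F_def norm_mult norm_divide)
      show "((\<lambda>s. \<bar>\<phi> s\<bar> / \<bar>\<omega>\<bar>) \<longlongrightarrow> 0) at_top"
        using tendsto_divide[OF tendsto_rabs_zero[OF lim] tendsto_const[of "\<bar>\<omega>\<bar>"]] \<open>\<omega> \<noteq> 0\<close> by simp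
    qed
  qed
  moreover have "(LBINT s=0..\<infinity>. f s) = half_line_fourier \<phi> \<omega> + half_line_fourier \<phi>' \<omega> / (- \<i> * \<omega>)"
    unfolding f_def half_line_fourier_def
    using integrable_cis by (simp add: interval_lebesgue_integrable_half_line)
  ultimately show ?thesis
    using \<open>\<omega> \<noteq> 0\<close> unfolding F_def by (simp add: field_simps)
qed

lemma half_line_fourier_expansion:
  fixes \<phi> :: "nat \<Rightarrow> real \<Rightarrow> real"
  assumes deriv: "\<And>k s. (\<phi> k has_real_derivative \<phi> (Suc k) s) (at s)"
    and integrable: "\<And>k. integrable lborel (\<phi> k)" and lim: "\<And>k. (\<phi> k \<longlongrightarrow> 0) at_top"
    and "\<omega> \<noteq> 0"
  shows "half_line_fourier (\<phi> 0) \<omega> = (complex_of_real (\<phi> 0 0) * (\<i> * \<omega>)\<^sup>2 +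
    complex_of_real (\<phi> 1 0) * (\<i> * \<omega>) + complex_of_real (\<phi> 2 0) + half_line_fourier (\<phi> 3) \<omega>) / (\<i> * \<omega>) ^ 3"
proof -
  have step: "half_line_fourier (\<phi> k) \<omega> =
      (complex_of_real (\<phi> k 0) + half_line_fourier (\<phi> (Suc k)) \<omega>) / (\<i> * \<omega>)" for k
  proof (rule half_line_fourier_by_parts[OF \<open>\<omega> \<noteq> 0\<close> deriv _ integrable integrable lim])
    show "continuous_on UNIV (\<phi> (Suc k))"
      using deriv by (intro continuous_at_imp_continuous_on ballI DERIV_isCont) auto
  qed
  have e0: "half_line_fourier (\<phi> 0) \<omega> = (complex_of_real (\<phi> 0 0) + half_line_fourier (\<phi> 1) \<omega>) / (\<i> * \<omega>)"
    using step[of 0] by simp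
  have e1: "half_line_fourier (\<phi> 1) \<omega> = (complex_of_real (\<phi> 1 0) + half_line_fourier (\<phi> 2) \<omega>) / (\<i> * \<omega>)"
    using step[of 1] by (simp add: numeral_2_eq_2)
  have e2: "half_line_fourier (\<phi> 2) \<omega> = (complex_of_real (\<phi> 2 0) + half_line_fourier (\<phi> 3) \<omega>) / (\<i> * \<omega>)"
    using step[of 2] by (simp add: numeral_3_eq_3 numeral_2_eq_2)
  show ?thesis
    unfolding e0 e1 e2 using \<open>\<omega> \<noteq> 0\<close> by (simp add: field_simps power2_eq_square power3_eq_cube)
qed

lemma half_line_fourier_lower_bound:
  fixes \<phi> :: "nat \<Rightarrow> real \<Rightarrow> real"
  assumes deriv: "\<And>k s. (\<phi> k has_real_derivative \<phi> (Suc k) s) (at s)"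
    and integrable: "\<And>k. integrable lborel (\<phi> k)" and lim: "\<And>k. (\<phi> k \<longlongrightarrow> 0) at_top"
    and "\<phi> 0 0 = 0" and "\<phi> 1 0 \<noteq> 0"
  shows "\<forall>\<^sub>F \<omega> in at_top. \<bar>\<phi> 1 0\<bar> / (2 * \<omega>\<^sup>2) \<le> norm (half_line_fourier (\<phi> 0) \<omega>)"
proof -
  define c where "c = \<bar>\<phi> 1 0\<bar>"
  define B where "B = (LBINT s. \<bar>\<phi> 3 s\<bar>) + \<bar>\<phi> 2 0\<bar>"
  have "c > 0" using \<open>\<phi> 1 0 \<noteq> 0\<close> by (simp add: c_def)
  have "B \<ge> 0" unfolding B_def by (intro add_nonneg_nonneg integral_nonneg_AE) auto
  have "c / (2 * \<omega>\<^sup>2) \<le> norm (half_line_fourier (\<phi> 0) \<omega>)" if \<omega>: "\<omega> \<ge> 2 * B / c + 1" for \<omega>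
  proof -
    have "\<omega> > 0" using \<omega> \<open>B \<ge> 0\<close> \<open>c > 0\<close> by (smt (verit) divide_nonneg_pos)
    have tail: "norm (complex_of_real (\<phi> 2 0) + half_line_fourier (\<phi> 3) \<omega>) \<le> B"
      using norm_half_line_fourier_le[OF integrable, of 3 \<omega>] unfolding B_def
      by (intro order_trans[OF norm_triangle_ineq]) simp
    have "norm (complex_of_real (\<phi> 1 0) * (\<i> * \<omega>)) = c * \<omega>"
      using \<open>\<omega> > 0\<close> by (simp add: norm_mult c_def)
    moreover have "norm a - norm b \<le> norm (a + b)" for a b :: complex
      using norm_triangle_ineq2[of a "- b"] by simp
    ultimately have "c * \<omega> - B \<le> norm (complex_of_real (\<phi> 1 0) * (\<i> * \<omega>) +
        (complex_of_real (\<phi> 2 0) + half_line_fourier (\<phi> 3) \<omega>))"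
      using tail by (smt (verit))
    also have "\<dots> / \<omega> ^ 3 = norm (half_line_fourier (\<phi> 0) \<omega>)"
      using half_line_fourier_expansion[of \<phi>, OF deriv integrable lim, of \<omega>] \<open>\<omega> > 0\<close> \<open>\<phi> 0 0 = 0\<close>
      by (simp add: norm_divide norm_mult norm_power add.assoc)
    moreover have "c / (2 * \<omega>\<^sup>2) \<le> (c * \<omega> - B) / \<omega> ^ 3"
    proof -
      have "2 * B \<le> c * \<omega> - c" using \<omega> \<open>c > 0\<close> by (simp add: field_simps)
      then show ?thesis using \<open>\<omega> > 0\<close> \<open>c > 0\<close> by (simp add: field_simps eval_nat_numeral)
    qed
    ultimately show ?thesis using \<open>\<omega> > 0\<close> by (smt (verit) divide_right_mono zero_le_power)
  qed
  then show ?thesis unfolding c_def eventually_at_top_linorder by blast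
qed

section \<open>The amplitude\<close>

definition gauss_integral :: "real \<Rightarrow> real \<Rightarrow> real" where
  "gauss_integral c s = (LBINT t=ereal 0..ereal s. gauss c t)"

lemma has_real_derivative_gauss_integral:
  "(gauss_integral c has_real_derivative gauss c s) (at s)"
proof -
  have "((\<lambda>u. LBINT t=ereal 0..ereal u. gauss c t) has_vector_derivative gauss c s)
      (at s within {-\<bar>s\<bar>-1..\<bar>s\<bar>+1})"
    by (rule interval_integral_FTC2) (auto intro: continuous_on_gauss)
  then have "(gauss_integral c has_vector_derivative gauss c s) (at s)"
    unfolding gauss_integral_def[abs_def] by (subst (asm) at_within_Icc_at) auto
  then show ?thesis by (simp add: has_real_derivative_iff_has_vector_derivative)
qed

lemma gauss_integral_0 [simp]: "gauss_integral c 0 = 0"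
  unfolding gauss_integral_def by (rule interval_integral_endpoints_same)

lemma abs_gauss_integral_le:
  assumes "0 \<le> c"
  shows "\<bar>gauss_integral c s\<bar> \<le> \<bar>s\<bar>"
proof (cases "s = 0")
  case False
  have "\<exists>z. min 0 s < z \<and> z < max 0 s \<and>
      gauss_integral c (max 0 s) - gauss_integral c (min 0 s) = (max 0 s - min 0 s) * gauss c z"
    using False by (intro MVT2) (auto intro: has_real_derivative_gauss_integral)
  then obtain z where "gauss_integral c (max 0 s) - gauss_integral c (min 0 s) = (max 0 s - min 0 s) * gauss c z"
    by blast
  then have "\<bar>gauss_integral c s\<bar> = \<bar>s\<bar> * gauss c z"
    using gauss_pos[of c z] by (cases "0 \<le> s") (auto simp: abs_mult)
  also have "\<dots> \<le> \<bar>s\<bar>"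
    using gauss_le_1[OF assms, of z] by (simp add: mult_left_le)
  finally show ?thesis .
qed simp

text \<open>The amplitude \<open>\<phi>\<close> and all its derivatives are of the form \<open>amp P Q\<close>.\<close>

definition amp :: "real poly \<Rightarrow> real poly \<Rightarrow> real \<Rightarrow> real" where
  "amp P Q s = poly P s * gauss (pi/3) s * gauss_integral (pi/2) s + poly Q s * gauss (pi/3) s * gauss (pi/2) s"

fun amp_poly_deriv :: "real poly \<times> real poly \<Rightarrow> real poly \<times> real poly" where
  "amp_poly_deriv (P, Q) =
    (pderiv P + [:0, - 2 * (pi/3):] * P, P + pderiv Q + [:0, - 2 * (pi/3 + pi/2):] * Q)"

lemma has_real_derivative_amp:
  "(amp P Q has_real_derivative case_prod amp (amp_poly_deriv (P, Q)) s) (at s)"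
proof -
  have "(amp P Q has_real_derivative
     ((poly (pderiv P) s * gauss (pi/3) s + (- 2 * (pi/3) * s * gauss (pi/3) s) * poly P s) * gauss_integral (pi/2) s
       + gauss (pi/2) s * (poly P s * gauss (pi/3) s)) +
     ((poly (pderiv Q) s * gauss (pi/3) s + (- 2 * (pi/3) * s * gauss (pi/3) s) * poly Q s) * gauss (pi/2) s
       + (- 2 * (pi/2) * s * gauss (pi/2) s) * (poly Q s * gauss (pi/3) s))) (at s)"
    unfolding amp_def[abs_def]
    by (intro DERIV_add DERIV_mult poly_DERIV has_real_derivative_gauss has_real_derivative_gauss_integral)
  then show ?thesis
    by (simp add: amp_def algebra_simps)
qed

lemma amp_at_0: "amp P Q 0 = poly Q 0"
  by (simp add: amp_def)

lemma amp_bounded_by_gauss: "\<exists>M. \<forall>s. \<bar>amp P Q s\<bar> \<le> M * gauss (pi/6) s"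
proof -
  obtain M1 where M1: "\<And>s. \<bar>poly (P * [:0,1:]) s\<bar> * gauss (pi/6) s \<le> M1"
    using poly_mult_gauss_bounded[of "pi/6" "P * [:0,1:]"] by auto
  obtain M2 where M2: "\<And>s. \<bar>poly Q s\<bar> * gauss (pi/6) s \<le> M2"
    using poly_mult_gauss_bounded[of "pi/6" Q] by auto
  have "\<bar>amp P Q s\<bar> \<le> (M1 + M2) * gauss (pi/6) s" for s
  proof -
    have split: "gauss (pi/3) s = gauss (pi/6) s * gauss (pi/6) s"
      by (simp add: gauss_def exp_add[symmetric])
    have "\<bar>amp P Q s\<bar> \<le> \<bar>poly P s\<bar> * gauss (pi/3) s * \<bar>gauss_integral (pi/2) s\<bar> +
        \<bar>poly Q s\<bar> * gauss (pi/3) s * gauss (pi/2) s"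
      unfolding amp_def using gauss_pos[of "pi/3" s] gauss_pos[of "pi/2" s]
      by (rule_tac order_trans[OF abs_triangle_ineq]) (simp add: abs_mult)
    also have "\<dots> \<le> \<bar>poly P s\<bar> * gauss (pi/3) s * \<bar>s\<bar> + \<bar>poly Q s\<bar> * gauss (pi/3) s"
      using abs_gauss_integral_le[of "pi/2" s] gauss_le_1[of "pi/2" s] gauss_pos[of "pi/3" s]
      by (intro add_mono mult_left_mono) (auto intro: mult_left_le)
    also have "\<dots> = (\<bar>poly (P * [:0,1:]) s\<bar> * gauss (pi/6) s + \<bar>poly Q s\<bar> * gauss (pi/6) s) * gauss (pi/6) s"
      unfolding split by (simp add: abs_mult algebra_simps)
    also have "\<dots> \<le> (M1 + M2) * gauss (pi/6) s"
      using gauss_pos[of "pi/6" s] by (intro mult_right_mono add_mono M1 M2) auto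
    finally show ?thesis .
  qed
  then show ?thesis by blast
qed

lemma continuous_on_amp: "continuous_on A (amp P Q)"
  using has_real_derivative_amp by (intro continuous_at_imp_continuous_on ballI DERIV_isCont) auto

lemma borel_measurable_amp [measurable]: "amp P Q \<in> borel_measurable borel"
  by (intro borel_measurable_continuous_onI continuous_on_amp)

lemma integrable_amp: "integrable lborel (amp P Q)"
proof -
  obtain M where M: "\<And>s. \<bar>amp P Q s\<bar> \<le> M * gauss (pi/6) s"
    using amp_bounded_by_gauss by blast
  show ?thesis
  proof (rule Bochner_Integration.integrable_bound)
    show "integrable lborel (\<lambda>s. M * gauss (pi/6) s)"
      by (intro integrable_mult_right integrable_gauss) simp
    show "AE s in lborel. norm (amp P Q s) \<le> norm (M * gauss (pi/6) s)"
      using M by (auto intro: order_trans[OF _ abs_ge_self])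
  qed simp
qed

lemma tendsto_amp_at_top: "(amp P Q \<longlongrightarrow> 0) at_top"
proof -
  obtain M where M: "\<And>s. \<bar>amp P Q s\<bar> \<le> M * gauss (pi/6) s"
    using amp_bounded_by_gauss by blast
  show ?thesis
  proof (rule Lim_null_comparison)
    show "\<forall>\<^sub>F s in at_top. norm (amp P Q s) \<le> M * gauss (pi/6) s"
      using M by simp
    have "((\<lambda>s. exp (- (pi/6) * s\<^sup>2)) \<longlongrightarrow> 0) at_top"
      by real_asymp
    then show "((\<lambda>s. M * gauss (pi/6) s) \<longlongrightarrow> 0) at_top"
      unfolding gauss_def by (rule tendsto_mult_right_zero)
  qed
qed

definition amplitude_deriv :: "nat \<Rightarrow> real \<Rightarrow> real" where
  "amplitude_deriv k = case_prod amp ((amp_poly_deriv ^^ k) ([:1 / sqrt 6:], 0))"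

lemma has_real_derivative_amplitude_deriv:
  "(amplitude_deriv k has_real_derivative amplitude_deriv (Suc k) s) (at s)"
  using has_real_derivative_amp
  by (simp add: amplitude_deriv_def split: prod.split)

lemma integrable_amplitude_deriv: "integrable lborel (amplitude_deriv k)"
  by (simp add: amplitude_deriv_def integrable_amp split: prod.split)

lemma tendsto_amplitude_deriv_at_top: "(amplitude_deriv k \<longlongrightarrow> 0) at_top"
  by (simp add: amplitude_deriv_def tendsto_amp_at_top split: prod.split)

lemma amplitude_deriv_at_0: "amplitude_deriv 0 0 = 0" "amplitude_deriv 1 0 = 1 / sqrt 6"
  by (simp_all add: amplitude_deriv_def amp_at_0)

lemma eventually_norm_half_line_fourier_amplitude_ge:
  "\<forall>\<^sub>F \<omega> in at_top. (1 / sqrt 6) / (2 * \<omega>\<^sup>2) \<le> norm (half_line_fourier (amplitude_deriv 0) \<omega>)"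
  using half_line_fourier_lower_bound[of amplitude_deriv, OF has_real_derivative_amplitude_deriv
      integrable_amplitude_deriv tendsto_amplitude_deriv_at_top]
  by (simp add: amplitude_deriv_at_0[unfolded One_nat_def])

section \<open>The operator on Gaussians\<close>

lemma integrable_lborel_product:
  fixes f :: "real \<Rightarrow> real" and g :: "'b::euclidean_space \<Rightarrow> real"
  assumes f: "integrable lborel f" and g: "integrable lborel g"
  shows "integrable lborel (\<lambda>z. f (fst z) * g (snd z))"
proof -
  have [measurable]: "f \<in> borel_measurable borel" "g \<in> borel_measurable borel"
    using f g by (auto dest: borel_measurable_integrable)
  have "integrable (lborel \<Otimes>\<^sub>M lborel) (\<lambda>z. f (fst z) * g (snd z))"
  proof (rule lborel_pair.Fubini_integrable)
    show "(\<lambda>z. f (fst z) * g (snd z)) \<in> borel_measurable (lborel \<Otimes>\<^sub>M lborel)" by measurable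
    have "integrable lborel (\<lambda>x. \<bar>f x\<bar> * (\<integral>y. norm (g y) \<partial>lborel))"
      using f by (intro integrable_mult_left integrable_abs)
    then show "integrable lborel (\<lambda>x. \<integral>y. norm (f (fst (x, y)) * g (snd (x, y))) \<partial>lborel)"
      by (simp add: abs_mult)
    show "AE x in lborel. integrable lborel (\<lambda>y. f (fst (x, y)) * g (snd (x, y)))"
      using g by simp
  qed
  then show ?thesis by (simp add: lborel_prod)
qed

lemma integral_gauss_shift:
  assumes "0 < c"
  shows "(\<integral>a. gauss c (a + b) \<partial>lborel) = sqrt (pi / c)"
proof -
  define \<sigma> where "\<sigma> = sqrt (1 / (2 * c))"
  have s2: "\<sigma>\<^sup>2 = 1 / (2 * c)" and "\<sigma> > 0"
    using assms by (simp_all add: \<sigma>_def)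
  have "sqrt (2 * pi * \<sigma>\<^sup>2) = sqrt (pi / c)"
    using assms by (simp add: s2)
  then have "gauss c (a + b) = sqrt (pi / c) * normal_density (-b) \<sigma> a" for a
    using assms \<open>\<sigma> > 0\<close> unfolding normal_density_def gauss_def s2 by (simp add: field_simps)
  moreover have "(\<integral>a. normal_density (-b) \<sigma> a \<partial>lborel) = 1"
    using \<open>\<sigma> > 0\<close> by (rule integral_normal_density)
  ultimately show ?thesis by simp
qed

definition C112_cone :: "(real \<times> real \<times> real) set" where
  "C112_cone = {\<xi>. fst \<xi> < fst (snd \<xi>) \<and> fst (snd \<xi>) < - snd (snd \<xi>) / 2}"

definition gaussian_integrand :: "real \<Rightarrow> real \<times> real \<times> real \<Rightarrow> complex" where
  "gaussian_integrand x \<xi> =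
    complex_of_real (gauss pi (fst \<xi>) * gauss pi (fst (snd \<xi>)) * gauss pi (snd (snd \<xi>))) *
    cis (2 * pi * x * (fst \<xi> + fst (snd \<xi>) + snd (snd \<xi>)))"

lemma sets_C112_cone [measurable]: "C112_cone \<in> sets lborel"
proof -
  have "open C112_cone" unfolding C112_cone_def
    by (intro open_Collect_conj open_Collect_less continuous_intros) auto
  then show ?thesis by simp
qed

lemma borel_measurable_gaussian_integrand [measurable]:
  "gaussian_integrand x \<in> borel_measurable lborel"
  unfolding gaussian_integrand_def gauss_def
  by (simp add: borel_measurable_continuous_onI continuous_intros)

lemma C112_gaussian_eq_integral:
  "C112 gaussian gaussian gaussian x = (\<integral>\<xi>. indicator C112_cone \<xi> *\<^sub>R gaussian_integrand x \<xi> \<partial>lborel)"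
proof -
  have "(\<lambda>\<xi>. case \<xi> of (\<xi>1, \<xi>2, \<xi>3) \<Rightarrow> gaussian \<xi>1 * cis (2 * pi * x * \<xi>1) *
      gaussian \<xi>2 * cis (2 * pi * x * \<xi>2) * gaussian \<xi>3 * cis (2 * pi * x * \<xi>3)) = gaussian_integrand x"
  proof
    fix \<xi> :: "real \<times> real \<times> real"
    obtain a b c where \<xi>: "\<xi> = (a, b, c)" by (cases \<xi>) auto
    have "cis (2 * pi * x * a) * cis (2 * pi * x * b) * cis (2 * pi * x * c) = cis (2 * pi * x * (a + b + c))"
      by (simp add: cis_mult algebra_simps)
    then show "(case \<xi> of (\<xi>1, \<xi>2, \<xi>3) \<Rightarrow> gaussian \<xi>1 * cis (2 * pi * x * \<xi>1) * gaussian \<xi>2 *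
        cis (2 * pi * x * \<xi>2) * gaussian \<xi>3 * cis (2 * pi * x * \<xi>3)) = gaussian_integrand x \<xi>"
      unfolding \<xi> gaussian_integrand_def gaussian_def by (simp add: mult_ac)
  qed
  then show ?thesis
    unfolding C112_def fourier_gaussian C112_cone_def[symmetric] by (simp add: set_lebesgue_integral_def)
qed

lemma integrable_gaussian_integrand:
  "integrable lborel (\<lambda>\<xi>. indicator C112_cone \<xi> *\<^sub>R gaussian_integrand x \<xi>)"
proof (rule Bochner_Integration.integrable_bound)
  have "integrable lborel (\<lambda>z. gauss pi (fst z) * (\<lambda>w. gauss pi (fst w) * gauss pi (snd w)) (snd z))"
    by (intro integrable_lborel_product integrable_gauss) simp_all
  then show "integrable lborel (\<lambda>z::real\<times>real\<times>real. gauss pi (fst z) * (gauss pi (fst (snd z)) * gauss pi (snd (snd z))))"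
    by simp
  show "AE z in lborel. norm (indicator C112_cone z *\<^sub>R gaussian_integrand x z) \<le>
      norm (gauss pi (fst z) * (gauss pi (fst (snd z)) * gauss pi (snd (snd z))))"
    by (auto simp: gaussian_integrand_def norm_mult gauss_def indicator_def)
qed measurable

definition sheared_integrand :: "real \<Rightarrow> real \<Rightarrow> real \<times> real \<Rightarrow> complex" where
  "sheared_integrand x a y = complex_of_real ((if 0 < fst y \<and> fst y < snd y then 1 else 0) *
      (gauss pi a * gauss pi (a + fst y) * gauss pi (- snd y - 2 * a - fst y))) * cis (- (2 * pi * x) * snd y)"

lemma gaussian_integrand_freq_shear:
  "indicator C112_cone (freq_shear z) *\<^sub>R gaussian_integrand x (freq_shear z) = case_prod (sheared_integrand x) z"
proof -
  obtain a t s where z: "z = (a, t, s)" by (cases z) auto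
  have "((a, a + t, - s - 2 * a - t) \<in> C112_cone) = (0 < t \<and> t < s)"
    unfolding C112_cone_def by (auto simp: field_simps)
  moreover have "2 * pi * x * (a + (a + t) + (- s - 2 * a - t)) = - (2 * pi * x) * s"
    by (simp add: algebra_simps)
  moreover have "freq_shear z = (a, a + t, - s - 2 * a - t)"
    by (simp add: freq_shear_def z)
  ultimately show ?thesis unfolding z
    by (simp only: gaussian_integrand_def sheared_integrand_def indicator_def scaleR_conv_of_real
        fst_conv snd_conv prod.case) simp
qed

lemma C112_gaussian_eq_sheared_integral:
  "C112 gaussian gaussian gaussian x = integral\<^sup>L (lborel \<Otimes>\<^sub>M lborel) (case_prod (sheared_integrand x))"
  and integrable_sheared_integrand:
  "integrable (lborel \<Otimes>\<^sub>M lborel) (case_prod (sheared_integrand x))"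
proof -
  have shear: "(\<lambda>z. indicator C112_cone (freq_shear z) *\<^sub>R gaussian_integrand x (freq_shear z)) =
      case_prod (sheared_integrand x)"
    using gaussian_integrand_freq_shear by blast
  have "C112 gaussian gaussian gaussian x =
      (\<integral>\<xi>. indicator C112_cone \<xi> *\<^sub>R gaussian_integrand x \<xi> \<partial>distr lborel lborel freq_shear)"
    by (simp add: C112_gaussian_eq_integral distr_freq_shear)
  also have "\<dots> = integral\<^sup>L lborel (case_prod (sheared_integrand x))"
    unfolding shear[symmetric] by (rule integral_distr) measurable
  finally show "C112 gaussian gaussian gaussian x = integral\<^sup>L (lborel \<Otimes>\<^sub>M lborel) (case_prod (sheared_integrand x))"
    by (simp add: lborel_prod)
  have "integrable (distr lborel lborel freq_shear) (\<lambda>\<xi>. indicator C112_cone \<xi> *\<^sub>R gaussian_integrand x \<xi>)"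
    using integrable_gaussian_integrand by (simp add: distr_freq_shear)
  then have "integrable lborel (case_prod (sheared_integrand x))"
    unfolding shear[symmetric] by (subst (asm) integrable_distr_eq) measurable
  then show "integrable (lborel \<Otimes>\<^sub>M lborel) (case_prod (sheared_integrand x))"
    by (simp add: lborel_prod)
qed

lemma gauss_pi_sheared_product:
  "gauss pi a * gauss pi (a + t) * gauss pi (- s - 2 * a - t) =
    gauss (pi/2) t * gauss (pi/3) s * gauss (6 * pi) (a + (3 * t + 2 * s) / 6)"
proof -
  have "- pi * a\<^sup>2 + - pi * (a + t)\<^sup>2 + - pi * (- s - 2 * a - t)\<^sup>2 =
      - (pi/2) * t\<^sup>2 + - (pi/3) * s\<^sup>2 + - (6 * pi) * (a + (3 * t + 2 * s) / 6)\<^sup>2"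
    by (simp add: power2_eq_square field_simps)
  then show ?thesis unfolding gauss_def by (simp add: exp_add[symmetric])
qed

definition reduced_integrand :: "real \<Rightarrow> real \<times> real \<Rightarrow> complex" where
  "reduced_integrand x y = complex_of_real ((if 0 < fst y \<and> fst y < snd y then 1 else 0) *
      (gauss (pi/2) (fst y) * gauss (pi/3) (snd y) / sqrt 6)) * cis (- (2 * pi * x) * snd y)"

lemma integral_sheared_integrand: "(\<integral>a. sheared_integrand x a y \<partial>lborel) = reduced_integrand x y"
proof -
  have "(\<integral>a. gauss (6 * pi) (a + (3 * fst y + 2 * snd y) / 6) \<partial>lborel) = 1 / sqrt 6"
    by (simp add: integral_gauss_shift real_sqrt_divide)
  then show ?thesis
    unfolding sheared_integrand_def reduced_integrand_def gauss_pi_sheared_product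
    by (simp add: mult.assoc)
qed

lemma C112_gaussian_eq_reduced_integral:
  "C112 gaussian gaussian gaussian x = integral\<^sup>L (lborel \<Otimes>\<^sub>M lborel) (case_prod (\<lambda>t s. reduced_integrand x (t, s)))"
  and integrable_reduced_integrand:
  "integrable (lborel \<Otimes>\<^sub>M lborel) (case_prod (\<lambda>t s. reduced_integrand x (t, s)))"
proof -
  note integrable = integrable_sheared_integrand[of x]
  have reduce: "(\<lambda>y. \<integral>a. sheared_integrand x a y \<partial>lborel) = reduced_integrand x"
    by (simp add: integral_sheared_integrand)
  have "C112 gaussian gaussian gaussian x = (\<integral>y. (\<integral>a. sheared_integrand x a y \<partial>lborel) \<partial>lborel)"
    unfolding C112_gaussian_eq_sheared_integral by (rule lborel_pair.integral_snd[OF integrable, symmetric])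
  then show "C112 gaussian gaussian gaussian x = integral\<^sup>L (lborel \<Otimes>\<^sub>M lborel) (case_prod (\<lambda>t s. reduced_integrand x (t, s)))"
    unfolding reduce by (simp add: lborel_prod)
  show "integrable (lborel \<Otimes>\<^sub>M lborel) (case_prod (\<lambda>t s. reduced_integrand x (t, s)))"
    using lborel_pair.integrable_snd[OF integrable] unfolding reduce lborel_prod by simp
qed

lemma integral_reduced_integrand:
  "(\<integral>t. reduced_integrand x (t, s) \<partial>lborel) =
    indicator {0<..} s *\<^sub>R (complex_of_real (amplitude_deriv 0 s) * cis (- (2 * pi * x) * s))"
proof (cases "0 < s")
  case True
  have "reduced_integrand x (t, s) = complex_of_real (indicator {0<..<s} t * gauss (pi/2) t *
      (gauss (pi/3) s / sqrt 6)) * cis (- (2 * pi * x) * s)" for t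
    by (simp add: reduced_integrand_def indicator_def)
  then have "(\<integral>t. reduced_integrand x (t, s) \<partial>lborel) = complex_of_real ((\<integral>t. indicator {0<..<s} t *
      gauss (pi/2) t \<partial>lborel) * (gauss (pi/3) s / sqrt 6)) * cis (- (2 * pi * x) * s)"
    by (simp only: integral_mult_left_zero integral_complex_of_real)
  also have "(\<integral>t. indicator {0<..<s} t * gauss (pi/2) t \<partial>lborel) = gauss_integral (pi/2) s"
    unfolding gauss_integral_def using True
    by (simp add: interval_lebesgue_integral_def set_lebesgue_integral_def mult.commute)
  finally show ?thesis
    using True by (simp add: amplitude_deriv_def amp_def mult_ac)
next
  case False
  then have "reduced_integrand x (t, s) = 0" for t
    by (simp add: reduced_integrand_def)
  then show ?thesis using False by simp
qed

lemma C112_gaussian_eq_half_line_fourier: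
  "C112 gaussian gaussian gaussian x = half_line_fourier (amplitude_deriv 0) (2 * pi * x)"
proof -
  have "C112 gaussian gaussian gaussian x = (\<integral>s. (\<integral>t. reduced_integrand x (t, s) \<partial>lborel) \<partial>lborel)"
    unfolding C112_gaussian_eq_reduced_integral
    by (rule lborel_pair.integral_snd[OF integrable_reduced_integrand, symmetric])
  then show ?thesis
    by (simp add: integral_reduced_integrand half_line_fourier_def interval_lebesgue_integral_def
        set_lebesgue_integral_def zero_ereal_def)
qed

section \<open>Failure of the estimate\<close>

lemma eventually_C112_gaussian_ge:
  "\<exists>K>0. \<forall>\<^sub>F x in at_top. K / x\<^sup>2 \<le> norm (C112 gaussian gaussian gaussian x)"
proof (intro exI conjI)
  show "0 < (1 / sqrt 6) / (8 * pi\<^sup>2)" by simp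
  have "filterlim (\<lambda>x. 2 * pi * x) at_top at_top"
    by (intro filterlim_tendsto_pos_mult_at_top[OF tendsto_const] filterlim_ident) simp
  from eventually_compose_filterlim[OF eventually_norm_half_line_fourier_amplitude_ge this]
  show "\<forall>\<^sub>F x in at_top. (1 / sqrt 6) / (8 * pi\<^sup>2) / x\<^sup>2 \<le> norm (C112 gaussian gaussian gaussian x)"
    by (elim eventually_mono) (simp add: C112_gaussian_eq_half_line_fourier power_mult_distrib)
qed

lemma nn_integral_inverse_atLeast_eq_infinity:
  assumes "1 \<le> (a::real)"
  shows "(\<integral>\<^sup>+x. ennreal (inverse x) * indicator {a..} x \<partial>lborel) = \<infinity>"
proof (rule ccontr)
  let ?I = "\<integral>\<^sup>+x. ennreal (inverse x) * indicator {a..} x \<partial>lborel"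
  have log_le: "ennreal (ln b - ln a) \<le> ?I" if "a \<le> b" for b
  proof -
    have "ennreal (ln b - ln a) = (\<integral>\<^sup>+x. ennreal (inverse x) * indicator {a..b} x \<partial>lborel)"
      using that assms by (intro nn_integral_FTC_Icc[symmetric]) (auto intro: DERIV_ln)
    also have "\<dots> \<le> ?I"
      by (intro nn_integral_mono) (auto split: split_indicator)
    finally show ?thesis .
  qed
  assume "?I \<noteq> \<infinity>"
  then obtain R where R: "?I = ennreal R" "0 \<le> R"
    by (cases ?I rule: ennreal_cases) auto
  define b where "b = exp (R + 1 + ln a)"
  have "a = exp (ln a)" using assms by simp
  also have "\<dots> \<le> b" unfolding b_def using R(2) by simp
  finally have "ennreal (ln b - ln a) \<le> ennreal R"
    using log_le R(1) by simp
  moreover have "ln b - ln a = R + 1"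
    using assms unfolding b_def by simp
  ultimately have "ennreal (R + 1) \<le> ennreal R"
    by simp
  then show False using R(2) by (subst (asm) ennreal_le_iff) auto
qed

lemma inverse_le_powr_of_inverse_square_le:
  fixes x y K \<rho> :: real
  assumes x: "1 \<le> x" and \<rho>: "0 < \<rho>" "\<rho> \<le> 1/2" and K: "0 < K" and y: "K / x\<^sup>2 \<le> y"
  shows "K powr \<rho> * inverse x \<le> y powr \<rho>"
proof -
  have "x powr (2 * \<rho>) \<le> x powr 1"
    using x \<rho> by (intro powr_mono) auto
  then have "inverse x \<le> inverse (x powr (2 * \<rho>))"
    using x by (intro le_imp_inverse_le) auto
  then have "K powr \<rho> * inverse x \<le> K powr \<rho> * inverse (x powr (2 * \<rho>))"
    by (rule mult_left_mono) simp
  also have "\<dots> = (K / x\<^sup>2) powr \<rho>"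
  proof -
    have "x\<^sup>2 = x powr 2" using x by (simp add: powr_numeral)
    then have "(x\<^sup>2) powr \<rho> = x powr (2 * \<rho>)" by (simp only: powr_powr)
    moreover have "(K / x\<^sup>2) powr \<rho> = K powr \<rho> / (x\<^sup>2) powr \<rho>"
      using x K by (simp add: powr_divide)
    ultimately show ?thesis by (simp only: divide_inverse)
  qed
  also have "\<dots> \<le> y powr \<rho>"
    using x K y \<rho> by (intro powr_mono2) auto
  finally show ?thesis .
qed

lemma Lp_norm_eq_infinity_of_inverse_square_le:
  fixes f :: "real \<Rightarrow> complex" and r :: ennreal
  assumes r: "0 < r" "r \<le> 1/2" and "0 < K"
    and lower: "\<forall>\<^sub>F x in at_top. K / x\<^sup>2 \<le> norm (f x)"
  shows "Lp_norm r f = \<infinity>"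
proof -
  have half: "(1/2 :: ennreal) = ennreal (1/2)"
    by (simp add: divide_ennreal_def)
  define \<rho> where "\<rho> = enn2real r"
  have "r \<noteq> \<infinity>"
    using r(2) unfolding half by (auto simp: top_unique)
  then have "r = ennreal \<rho>"
    unfolding \<rho>_def by (cases r rule: ennreal_cases) simp_all
  with r have "0 < \<rho>" "\<rho> \<le> 1/2"
    unfolding half by (simp_all add: ennreal_le_iff del: ennreal_half)
  obtain X where X: "\<And>x. X \<le> x \<Longrightarrow> K / x\<^sup>2 \<le> norm (f x)"
    using lower unfolding eventually_at_top_linorder by blast
  define X1 where "X1 = max X 1"
  have "ennreal (K powr \<rho>) * (ennreal (inverse x) * indicator {X1..} x) \<le> ennreal (norm (f x) powr \<rho>)" for x
  proof (cases "X1 \<le> x")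
    case True
    then have "1 \<le> x" "X \<le> x" by (auto simp: X1_def)
    then have "K powr \<rho> * inverse x \<le> norm (f x) powr \<rho>"
      using \<open>0 < \<rho>\<close> \<open>\<rho> \<le> 1/2\<close> \<open>0 < K\<close> X by (intro inverse_le_powr_of_inverse_square_le)
    then show ?thesis
      using True \<open>1 \<le> x\<close> by (simp add: ennreal_mult[symmetric] ennreal_leI)
  qed simp
  then have "(\<integral>\<^sup>+x. ennreal (K powr \<rho>) * (ennreal (inverse x) * indicator {X1..} x) \<partial>lborel) \<le>
      (\<integral>\<^sup>+x. ennreal (norm (f x) powr \<rho>) \<partial>lborel)"
    by (intro nn_integral_mono)
  moreover have "(\<integral>\<^sup>+x. ennreal (K powr \<rho>) * (ennreal (inverse x) * indicator {X1..} x) \<partial>lborel) = \<infinity>"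
    using \<open>0 < K\<close> by (subst nn_integral_cmult)
      (auto simp: X1_def nn_integral_inverse_atLeast_eq_infinity ennreal_mult_top)
  ultimately show ?thesis
    using \<open>r \<noteq> \<infinity>\<close> by (simp add: Lp_norm_def Let_def \<rho>_def top_unique)
qed

lemma inverse_ennreal_ge_1_obtains_real:
  assumes "1 \<le> (p::ennreal)"
  obtains a where "inverse p = ennreal a" "0 \<le> a" "a \<le> 1"
proof (cases p)
  case (real q)
  then have "1 \<le> q"
    using assms by (simp add: ennreal_le_iff2 ennreal_1[symmetric] del: ennreal_1)
  then show ?thesis
    using real that[of "inverse q"] by (simp add: inverse_ennreal inverse_le_1_iff)
qed (use that[of 0] in auto)

lemma inverse_sum_inverse_exponents_le_half:
  fixes p1 p2 p3 :: ennreal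
  assumes "1 \<le> p1" "1 \<le> p2" "1 \<le> p3" "2 \<le> inverse p1 + inverse p2 + inverse p3"
  shows "0 < inverse (inverse p1 + inverse p2 + inverse p3) \<and>
    inverse (inverse p1 + inverse p2 + inverse p3) \<le> 1/2"
proof -
  obtain a1 where a1: "inverse p1 = ennreal a1" "0 \<le> a1"
    using inverse_ennreal_ge_1_obtains_real[OF assms(1)] by blast
  obtain a2 where a2: "inverse p2 = ennreal a2" "0 \<le> a2"
    using inverse_ennreal_ge_1_obtains_real[OF assms(2)] by blast
  obtain a3 where a3: "inverse p3 = ennreal a3" "0 \<le> a3"
    using inverse_ennreal_ge_1_obtains_real[OF assms(3)] by blast
  have sum: "inverse p1 + inverse p2 + inverse p3 = ennreal (a1 + a2 + a3)"
    using a1 a2 a3 by (simp add: ennreal_plus)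
  have "ennreal 2 \<le> ennreal (a1 + a2 + a3)"
    using assms(4) unfolding sum by simp
  then have "2 \<le> a1 + a2 + a3"
    using a1 a2 a3 by (subst (asm) ennreal_le_iff) auto
  then have "inverse (a1 + a2 + a3) \<le> 1/2"
    using le_imp_inverse_le[of 2 "a1 + a2 + a3"] by simp
  then show ?thesis
    using \<open>2 \<le> a1 + a2 + a3\<close> unfolding sum
    by (simp add: inverse_ennreal divide_ennreal_def ennreal_leI flip: ennreal_half)
qed

theorem proposition3p1:
  fixes p1 p2 p3 :: ennreal
  assumes "1 \<le> p1" "1 \<le> p2" "1 \<le> p3"
    and "inverse p1 + inverse p2 + inverse p3 \<ge> 2"
  defines "r \<equiv> inverse (inverse p1 + inverse p2 + inverse p3)"
  shows "r \<le> 1 / 2 \<and>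
    \<not> (\<exists>C :: real. \<forall>f1 f2 f3. schwartz f1 \<longrightarrow> schwartz f2 \<longrightarrow> schwartz f3 \<longrightarrow>
         Lp_norm r (C112 f1 f2 f3) \<le> ennreal C * Lp_norm p1 f1 * Lp_norm p2 f2 * Lp_norm p3 f3)"
proof -
  have r: "0 < r" "r \<le> 1/2"
    using inverse_sum_inverse_exponents_le_half[OF assms(1-4)] by (simp_all add: r_def)
  obtain K where "0 < K" "\<forall>\<^sub>F x in at_top. K / x\<^sup>2 \<le> norm (C112 gaussian gaussian gaussian x)"
    using eventually_C112_gaussian_ge by blast
  then have "Lp_norm r (C112 gaussian gaussian gaussian) = \<infinity>"
    using r by (intro Lp_norm_eq_infinity_of_inverse_square_le)
  moreover have "ennreal C * Lp_norm p1 gaussian * Lp_norm p2 gaussian * Lp_norm p3 gaussian < \<infinity>" for C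
    using Lp_norm_gaussian_finite assms(1-3) by (simp add: ennreal_mult_less_top)
  ultimately show ?thesis
    using r(2) schwartz_gaussian by (auto simp: not_le intro!: exI[of _ gaussian])
qed

end
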